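(* Let $P=\sum_{S\in\mathbb{S}_P}S\subset\mathbb{E}^3$ be a three-dimensional zonotope with generator set $\mathbb{S}_P$ consisting of pairwise non-parallel segments centered at the origin, let $S_0\in\mathbb{S}_P$, and let $\vec S_0$ be the vector from one endpoint of $S_0$ to the other. Let $P^*=\sum_{S\in\mathbb{S}_P\setminus\{S_0\}}S$. Then $$P\cap(P+\vec S_0)=P^*+\tfrac12\vec S_0.$$
   Context: A zonotope is a Minkowski sum of finitely many segments; its generator set is such a family of segments. *)

theory Defs
  imports "HOL-Analysis.Analysis" "HOL-Library.Set_Algebras"
begin

definition centered_segment :: "'a::real_vector set \<Rightarrow> bool" where
  "centered_segment S \<longleftrightarrow> (\<exists>a. a \<noteq> 0 \<and> S = closed_segment (- a) a)"

definition parallel_segments :: "'a::real_vector set \<Rightarrow> 'a set \<Rightarrow> bool" where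
  "parallel_segments S T \<longleftrightarrow>
     (\<exists>a b c d. S = closed_segment a b \<and> T = closed_segment c d \<and> a \<noteq> b \<and> c \<noteq> d
        \<and> (\<exists>t. b - a = t *\<^sub>R (d - c)))"

definition minkowski_sum :: "'a::comm_monoid_add set set \<Rightarrow> 'a set" where
  "minkowski_sum SS = (\<Sum>S\<in>SS. S)"

end

theory Submission
  imports Defs
begin

text \<open>
  Write \<open>P = S\<^sub>0 + P\<^sup>*\<close> with \<open>S\<^sub>0 = [a, b]\<close> and \<open>d = b - a\<close>; only the convexity of \<open>P\<^sup>*\<close> matters.
  The inclusion \<open>\<supseteq>\<close> holds because \<open>b = a + d\<close> lies in both \<open>S\<^sub>0\<close> and \<open>S\<^sub>0 + d\<close>.
  Conversely, a point \<open>z\<close> of \<open>P \<inter> (P + d)\<close> can be written both as \<open>a + t d + y\<^sub>1\<close> and as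
  \<open>b + s d + y\<^sub>2\<close> with \<open>y\<^sub>i \<in> P\<^sup>*\<close> and \<open>s, t \<in> [0, 1]\<close>, so \<open>z - b\<close> lies on the segment from
  \<open>y\<^sub>2 = (z - b) - s d\<close> to \<open>y\<^sub>1 = (z - b) + (1 - t) d\<close>, hence in \<open>P\<^sup>*\<close>.
  For a centered \<open>S\<^sub>0\<close> we have \<open>b = d/2\<close>.
\<close>

lemma convex_mem_between_translates:
  fixes Q :: "'a::real_vector set"
  assumes "convex Q" and "x + s *\<^sub>R d \<in> Q" and "x - t *\<^sub>R d \<in> Q" and "0 \<le> s" and "0 \<le> t"
  shows "x \<in> Q"
proof (cases "s + t = 0")
  case True
  then have "t = 0"
    using assms(4,5) by linarith
  with assms(3) show ?thesis
    by simp
next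
  case False
  let ?u = "t / (s + t)"
  have "x = (1 - ?u) *\<^sub>R (x - t *\<^sub>R d) + ?u *\<^sub>R (x + s *\<^sub>R d)"
  proof -
    have "(1 - u) *\<^sub>R (x - t *\<^sub>R d) + u *\<^sub>R (x + s *\<^sub>R d) = x + (u * (s + t) - t) *\<^sub>R d"
      for u :: real
      by (simp add: algebra_simps)
    moreover have "?u * (s + t) = t"
      using False by simp
    ultimately show ?thesis
      by simp
  qed
  moreover have "0 \<le> ?u" "?u \<le> 1"
    using assms(4,5) False by (auto simp: divide_le_eq_1)
  ultimately have "x \<in> closed_segment (x - t *\<^sub>R d) (x + s *\<^sub>R d)"
    unfolding in_segment by blast
  then show ?thesis
    using closed_segment_subset[OF assms(3,2,1)] by blast
qed

lemma closed_segment_plus_inter_translate: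
  fixes Q :: "'a::real_vector set"
  assumes "convex Q"
  shows "(closed_segment a b + Q) \<inter> (\<lambda>x. x + (b - a)) ` (closed_segment a b + Q)
           = (\<lambda>x. x + b) ` Q"
proof (intro equalityI subsetI)
  fix z
  assume "z \<in> (closed_segment a b + Q) \<inter> (\<lambda>x. x + (b - a)) ` (closed_segment a b + Q)"
  then have "z \<in> closed_segment a b + Q" and "z - (b - a) \<in> closed_segment a b + Q"
    by auto
  then obtain u y\<^sub>1 v y\<^sub>2 where z: "z = u + y\<^sub>1" "z - (b - a) = v + y\<^sub>2"
    and u: "u \<in> closed_segment a b" and v: "v \<in> closed_segment a b" and y: "y\<^sub>1 \<in> Q" "y\<^sub>2 \<in> Q"
    by (meson set_plus_elim)
  from u obtain t where t: "0 \<le> t" "t \<le> 1" "u = (1 - t) *\<^sub>R a + t *\<^sub>R b"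
    unfolding in_segment by blast
  from v obtain s where s: "0 \<le> s" "s \<le> 1" "v = (1 - s) *\<^sub>R a + s *\<^sub>R b"
    unfolding in_segment by blast
  have "(z - b) + (1 - t) *\<^sub>R (b - a) = y\<^sub>1"
    using z(1) t(3) by (simp add: algebra_simps)
  moreover have "(z - b) - s *\<^sub>R (b - a) = y\<^sub>2"
    using z(2) s(3) by (simp add: algebra_simps)
  ultimately have "z - b \<in> Q"
    using convex_mem_between_translates[OF assms, of "z - b" "1 - t" "b - a" s] y t s by simp
  then show "z \<in> (\<lambda>x. x + b) ` Q"
    by (rule rev_image_eqI) simp
next
  fix z
  assume "z \<in> (\<lambda>x. x + b) ` Q"
  then obtain y where y: "y \<in> Q" "z = y + b"
    by blast
  have "z \<in> closed_segment a b + Q"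
    using y by (metis add.commute ends_in_segment(2) set_plus_intro)
  moreover have "a + y \<in> closed_segment a b + Q" and "z = (a + y) + (b - a)"
    using y by auto
  ultimately show "z \<in> (closed_segment a b + Q) \<inter> (\<lambda>x. x + (b - a)) ` (closed_segment a b + Q)"
    by blast
qed

lemma convex_minkowski_sum:
  assumes "\<And>S. S \<in> SS \<Longrightarrow> convex S"
  shows "convex (minkowski_sum SS)"
  unfolding minkowski_sum_def using assms by (rule convex_set_sum)

lemma minkowski_sum_remove:
  assumes "finite SS" and "S \<in> SS"
  shows "minkowski_sum SS = S + minkowski_sum (SS - {S})"
  unfolding minkowski_sum_def using assms by (rule sum.remove)

lemma centered_segment_endpoints:
  fixes p q :: "'a::euclidean_space"
  assumes "centered_segment (closed_segment p q)"
  shows "p = - q"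
proof -
  from assms obtain a where "closed_segment p q = closed_segment (- a) a"
    unfolding centered_segment_def by blast
  then have "{p, q} = {- a, a}"
    by simp
  then show ?thesis
    by (auto simp: doubleton_eq_iff)
qed

theorem corollary4p2:
  fixes SS :: "(real^3) set set" and S0 :: "(real^3) set" and p q :: "real^3"
  assumes "finite SS"
    and "\<And>S. S \<in> SS \<Longrightarrow> centered_segment S"
    and "\<And>S T. S \<in> SS \<Longrightarrow> T \<in> SS \<Longrightarrow> S \<noteq> T \<Longrightarrow> \<not> parallel_segments S T"
    and "aff_dim (minkowski_sum SS) = 3"
    and "S0 \<in> SS"
    and "S0 = closed_segment p q"
  shows "minkowski_sum SS \<inter> (\<lambda>x. x + (q - p)) ` minkowski_sum SS
           = (\<lambda>x. x + (1/2) *\<^sub>R (q - p)) ` minkowski_sum (SS - {S0})"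
proof -
  have "p = - q"
    using assms(2,5,6) centered_segment_endpoints by blast
  then have half: "(1/2) *\<^sub>R (q - p) = q"
    by (simp add: scaleR_2[symmetric])
  have "convex (minkowski_sum (SS - {S0}))"
    using assms(2) by (intro convex_minkowski_sum) (auto simp: centered_segment_def)
  then show ?thesis
    unfolding minkowski_sum_remove[OF assms(1,5)] assms(6) half
    by (rule closed_segment_plus_inter_translate)
qed

end
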